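(* With $G$, $d$, $G_0$, $X$ and the topology $\tau$ as in the context, let $Y$ be any Polish space with a continuous action of $G$. Then there is a map $\pi:Y\to X$ that is continuous, one-to-one, satisfies $\pi(g\cdot y)=g\cdot\pi(y)$ for all $g\in G$, $y\in Y$, and is open onto its image: for every open $U\subseteq Y$ there is a $\tau$-open $O\subseteq X$ with $U=\{y\in Y:\pi(y)\in O\}$.
   Context: Let $G$ be a Polish group, $d$ a compatible right-invariant metric on $G$ (i.e. $d(g_0h,g_1h)=d(g_0,g_1)$) bounded by $1$, and $G_0$ a countable dense subgroup of $G$. Let $\mathcal L(G,d)$ be the set of functions $f:G\to[0,1]$ with $|f(g_1)-f(g_2)|\le d(g_1,g_2)$ for all $g_1,g_2$. Let $\mathbb Q^{<\mathbb N}$ be the set of finite sequences of rationals; for $s\in\mathbb Q^{<\mathbb N}$ and rationals $a_1,\dots,a_k$, $sa_1\dots a_k$ denotes the sequence $s$ followed by $a_1,\dots,a_k$ (natural numbers are regarded as rationals). Elements of $\mathcal L(G,d)^{\mathbb Q^{<\mathbb N}}$ are families $\vec f=(f_s)_{s\in\mathbb Q^{<\mathbb N}}$, and $G$ acts by $(g\cdot\vec f)_s(g_0)=f_s(g_0g)$. Let $X$ be the set of $\vec f\in\mathcal L(G,d)^{\mathbb Q^{<\mathbb N}}$ such that, writing $t=sq_0q_1q_2\,0\,m\,n$ and $u=sq_0q_1q_2\,1\,m\,n$: (1) for all $s\in\mathbb Q^{<\mathbb N}$, $g_0\in G_0$, $m,n\in\mathbb N$, $q_0,q_1,q_2,\epsilon\in\mathbb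 Q\cap(0,1)$ with $0<q_i\pm\epsilon<1$ ($i=0,1,2$): $f_t(g_0)<q_1-\epsilon$ or $f_s(g_0)\le q_0+\epsilon$; (2) for the same range of parameters: $f_u(g_0)\ge q_2+\epsilon$ or $f_t(g_0)\ge q_1-\epsilon$; (3) for all $s\in\mathbb Q^{<\mathbb N}$, $g_0\in G_0$, $q_0,\epsilon\in\mathbb Q\cap(0,1)$: if $f_s(g_0)<q_0$ then there are $q_1,q_2\in\mathbb Q$, $g_1\in G_0$, $m,n\in\mathbb N$ with $0<q_2<q_1<q_0<1$, $d(g_0,g_1)<\epsilon$, and $f_u(g_1)<q_2$ where $u=sq_0q_1q_2\,1\,m\,n$. The topology $\tau$ on $X$ is the one generated by the subbasis of all sets $\{\vec f\in X: f_s(g_0)<q_0\}$ for $s\in\mathbb Q^{<\mathbb N}$, $g_0\in G_0$, $q_0\in\mathbb Q$. A Polish space is a separable completely metrizable space; a continuous action means the action map $G\times Y\to Y$ is jointly continuous. *)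

theory Defs
  imports "HOL-Analysis.Analysis" "HOL-Algebra.Group_Action"
begin

definition Polish_space :: "'a topology \<Rightarrow> bool" where
  "Polish_space X \<longleftrightarrow> completely_metrizable_space X \<and> separable_space X"

definition Lip_fun :: "('g, 'b) monoid_scheme \<Rightarrow> ('g \<Rightarrow> 'g \<Rightarrow> real) \<Rightarrow> ('g \<Rightarrow> real) set" where
  "Lip_fun G d = {f. f \<in> extensional (carrier G)
      \<and> (\<forall>x\<in>carrier G. 0 \<le> f x \<and> f x \<le> 1)
      \<and> (\<forall>x\<in>carrier G. \<forall>y\<in>carrier G. \<bar>f x - f y\<bar> \<le> d x y)}"

definition in01 :: "rat \<Rightarrow> bool" where
  "in01 q \<longleftrightarrow> 0 < q \<and> q < 1"

text \<open>The space X: families indexed by finite sequences of rationals satisfying (1)-(3).\<close>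
definition Xset :: "('g, 'b) monoid_scheme \<Rightarrow> ('g \<Rightarrow> 'g \<Rightarrow> real) \<Rightarrow> 'g set
                     \<Rightarrow> (rat list \<Rightarrow> 'g \<Rightarrow> real) set" where
  "Xset G d G0 = {F. (\<forall>s. F s \<in> Lip_fun G d)
     \<and> (\<forall>s. \<forall>g0\<in>G0. \<forall>m n :: nat. \<forall>q0 q1 q2 \<epsilon> :: rat.
          in01 q0 \<and> in01 q1 \<and> in01 q2 \<and> in01 \<epsilon>
          \<and> in01 (q0 - \<epsilon>) \<and> in01 (q0 + \<epsilon>) \<and> in01 (q1 - \<epsilon>) \<and> in01 (q1 + \<epsilon>)
          \<and> in01 (q2 - \<epsilon>) \<and> in01 (q2 + \<epsilon>) \<longrightarrow>
          F (s @ [q0, q1, q2, 0, of_nat m, of_nat n]) g0 < of_rat (q1 - \<epsilon>)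
          \<or> F s g0 \<le> of_rat (q0 + \<epsilon>))
     \<and> (\<forall>s. \<forall>g0\<in>G0. \<forall>m n :: nat. \<forall>q0 q1 q2 \<epsilon> :: rat.
          in01 q0 \<and> in01 q1 \<and> in01 q2 \<and> in01 \<epsilon>
          \<and> in01 (q0 - \<epsilon>) \<and> in01 (q0 + \<epsilon>) \<and> in01 (q1 - \<epsilon>) \<and> in01 (q1 + \<epsilon>)
          \<and> in01 (q2 - \<epsilon>) \<and> in01 (q2 + \<epsilon>) \<longrightarrow>
          F (s @ [q0, q1, q2, 1, of_nat m, of_nat n]) g0 \<ge> of_rat (q2 + \<epsilon>)
          \<or> F (s @ [q0, q1, q2, 0, of_nat m, of_nat n]) g0 \<ge> of_rat (q1 - \<epsilon>))
     \<and> (\<forall>s. \<forall>g0\<in>G0. \<forall>q0 \<epsilon> :: rat. in01 q0 \<and> in01 \<epsilon> \<longrightarrow>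
          F s g0 < of_rat q0 \<longrightarrow>
          (\<exists>q1 q2 :: rat. \<exists>g1\<in>G0. \<exists>m n :: nat.
              0 < q2 \<and> q2 < q1 \<and> q1 < q0 \<and> q0 < 1 \<and> d g0 g1 < of_rat \<epsilon>
              \<and> F (s @ [q0, q1, q2, 1, of_nat m, of_nat n]) g1 < of_rat q2))}"

definition Xtop :: "('g, 'b) monoid_scheme \<Rightarrow> ('g \<Rightarrow> 'g \<Rightarrow> real) \<Rightarrow> 'g set
                     \<Rightarrow> (rat list \<Rightarrow> 'g \<Rightarrow> real) topology" where
  "Xtop G d G0 = topology_generated_by
     {{F \<in> Xset G d G0. F s g0 < of_rat q0} | s g0 q0. g0 \<in> G0}"

definition actX :: "('g, 'b) monoid_scheme \<Rightarrow> 'g \<Rightarrow> (rat list \<Rightarrow> 'g \<Rightarrow> real)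
                     \<Rightarrow> (rat list \<Rightarrow> 'g \<Rightarrow> real)" where
  "actX G g F = (\<lambda>s. \<lambda>g0\<in>carrier G. F s (g0 \<otimes>\<^bsub>G\<^esub> g))"

end

theory Submission
  imports Defs
begin

(* Fix a compatible metric on Y and a dense sequence, which index countably many balls B_m.
   For a bounded continuous f on Y, the infimal convolution  z \<mapsto> inf_g (f (g z) + d(g, 1))
   is upper semicontinuous and 1-Lipschitz along orbits; right-invariance of d then makes
   g \<mapsto> F (g y) 1-Lipschitz for every such F, and upper semicontinuity makes y \<mapsto> F (g y)
   continuous into the subbasic sets of X.  By recursion on s we choose such functions F_s with
   values in [0,1]: for t = s q0 q1 q2 0 m n and u = s q0 q1 q2 1 m n, F_t and F_u are built from
   convolved bumps around B_m and B_n whenever 2B_m lies in {F_s < q0} and every g with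
   d(g, 1) < 2 q2 moves 2B_n into B_m, and are constant otherwise.  Then
   \<pi>(y)_s(g) = F_s(g y) satisfies (1) and (2) at every g, and (3) with g1 = g0, because linked
   balls exist around any point where F_s < q0 by joint continuity of the action.  The
   convolved bumps of single balls form a base of Y, which makes \<pi> open onto its image and,
   Y being T0, injective. *)

definition clamp :: "real \<Rightarrow> real" where
  "clamp x = max 0 (min 1 x)"

lemma clamp_bounds: "0 \<le> clamp x" "clamp x \<le> 1"
  by (auto simp: clamp_def)

lemma clamp_dist_le: "\<bar>clamp x - clamp y\<bar> \<le> \<bar>x - y\<bar>"
  by (auto simp: clamp_def)

lemma clamp_less_iff: "clamp x < c \<longleftrightarrow> 0 < c \<and> (1 < c \<or> x < c)"
  by (auto simp: clamp_def)

lemma le_clamp: "c \<le> 1 \<Longrightarrow> c \<le> x \<Longrightarrow> c \<le> clamp x"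
  by (auto simp: clamp_def)

definition upper_semicontinuous_map :: "'a topology \<Rightarrow> ('a \<Rightarrow> real) \<Rightarrow> bool" where
  "upper_semicontinuous_map X f \<longleftrightarrow> (\<forall>c. openin X {x \<in> topspace X. f x < c})"

lemma upper_semicontinuous_map_const: "upper_semicontinuous_map X (\<lambda>x. c)"
  unfolding upper_semicontinuous_map_def
proof
  fix c'
  show "openin X {x \<in> topspace X. c < c'}"
    by (cases "c < c'") simp_all
qed

lemma continuous_map_imp_upper_semicontinuous_map:
  "continuous_map X euclideanreal f \<Longrightarrow> upper_semicontinuous_map X f"
  by (simp add: upper_semicontinuous_map_def continuous_map_upper_lower_semicontinuous_lt)

lemma upper_semicontinuous_map_clamp:
  assumes "upper_semicontinuous_map X f"
  shows "upper_semicontinuous_map X (\<lambda>x. clamp (b + f x))"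
  unfolding upper_semicontinuous_map_def
proof
  fix c
  have "{x \<in> topspace X. clamp (b + f x) < c} =
      (if 0 < c then if 1 < c then topspace X else {x \<in> topspace X. f x < c - b} else {})"
    by (auto simp: clamp_less_iff)
  then show "openin X {x \<in> topspace X. clamp (b + f x) < c}"
    using assms by (simp add: upper_semicontinuous_map_def)
qed

lemma upper_semicontinuous_map_INF:
  assumes "I \<noteq> {}" and "\<And>x. x \<in> topspace X \<Longrightarrow> bdd_below ((\<lambda>i. f i x) ` I)"
    and "\<And>i. i \<in> I \<Longrightarrow> upper_semicontinuous_map X (f i)"
  shows "upper_semicontinuous_map X (\<lambda>x. INF i\<in>I. f i x)"
  unfolding upper_semicontinuous_map_def
proof
  fix c
  have "\<And>x. x \<in> topspace X \<Longrightarrow> (INF i\<in>I. f i x) < c \<longleftrightarrow> (\<exists>i\<in>I. f i x < c)"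
    using assms(1,2) by (rule cINF_less_iff)
  then have "{x \<in> topspace X. (INF i\<in>I. f i x) < c} = (\<Union>i\<in>I. {x \<in> topspace X. f i x < c})"
    by auto
  then show "openin X {x \<in> topspace X. (INF i\<in>I. f i x) < c}"
    using assms(3) by (auto simp: upper_semicontinuous_map_def)
qed

lemma inj_on_if_opens_are_preimages:
  assumes "t0_space X"
    and "\<And>U. openin X U \<Longrightarrow> \<exists>V. openin Y V \<and> U = {x \<in> topspace X. f x \<in> V}"
  shows "inj_on f (topspace X)"
proof (rule inj_onI, rule ccontr)
  fix x y
  assume x: "x \<in> topspace X" and y: "y \<in> topspace X" and "f x = f y" "x \<noteq> y"
  then obtain U where "openin X U" "x \<notin> U \<longleftrightarrow> y \<in> U"
    using assms(1) unfolding t0_space_def by blast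
  with assms(2) obtain V where "U = {x \<in> topspace X. f x \<in> V}"
    by blast
  with x y \<open>f x = f y\<close> \<open>x \<notin> U \<longleftrightarrow> y \<in> U\<close> show False
    by auto
qed

lemma opens_are_preimages_topology_generated_by:
  assumes "\<And>U x. openin X U \<Longrightarrow> x \<in> U \<Longrightarrow> \<exists>B\<in>\<S>. f x \<in> B \<and> {y \<in> topspace X. f y \<in> B} \<subseteq> U"
    and "openin X U"
  shows "\<exists>V. openin (topology_generated_by \<S>) V \<and> U = {x \<in> topspace X. f x \<in> V}"
proof (intro exI conjI)
  let ?V = "\<Union>{B \<in> \<S>. {y \<in> topspace X. f y \<in> B} \<subseteq> U}"
  show "openin (topology_generated_by \<S>) ?V"
    by (intro openin_Union) (auto intro: topology_generated_by_Basis)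
  show "U = {x \<in> topspace X. f x \<in> ?V}"
    using assms(1)[OF assms(2)] openin_subset[OF assms(2)] by blast
qed

section \<open>Right-invariant metrics and metric G-spaces\<close>

locale right_invariant_metric_group = group G for G :: "('g, 'b) monoid_scheme" (structure) +
  fixes d :: "'g \<Rightarrow> 'g \<Rightarrow> real"
  assumes metric: "Metric_space (carrier G) d"
    and right_invariant:
      "\<lbrakk>x \<in> carrier G; y \<in> carrier G; h \<in> carrier G\<rbrakk> \<Longrightarrow> d (x \<otimes> h) (y \<otimes> h) = d x y"
begin

sublocale d: Metric_space "carrier G" d
  by (fact metric)

lemma dist_mult_inv_one:
  assumes "g \<in> carrier G" "h \<in> carrier G"
  shows "d (g \<otimes> inv h) \<one> = d g h"
proof -
  have "d (g \<otimes> inv h \<otimes> h) (\<one> \<otimes> h) = d (g \<otimes> inv h) \<one>"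
    using assms by (intro right_invariant) auto
  moreover have "g \<otimes> inv h \<otimes> h = g"
    using assms by (simp add: m_assoc)
  ultimately show ?thesis
    using assms by simp
qed

lemma dist_inv_one: "h \<in> carrier G \<Longrightarrow> d (inv h) \<one> = d h \<one>"
  using dist_mult_inv_one[of \<one> h] d.commute by simp

lemma dist_mult_one_le:
  assumes "h \<in> carrier G" "k \<in> carrier G"
  shows "d (h \<otimes> k) \<one> \<le> d h \<one> + d k \<one>"
proof -
  have "d (h \<otimes> k) \<one> \<le> d (h \<otimes> k) (\<one> \<otimes> k) + d k \<one>"
    using assms d.triangle[of "h \<otimes> k" k \<one>] by simp
  then show ?thesis
    using assms by (simp only: right_invariant one_closed)
qed

end

locale metric_G_space = right_invariant_metric_group G d
  for G :: "('g, 'b) monoid_scheme" (structure) and d +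
  fixes M :: "'y set" and \<rho> :: "'y \<Rightarrow> 'y \<Rightarrow> real" and a :: "'g \<Rightarrow> 'y \<Rightarrow> 'y"
  assumes metric_space: "Metric_space M \<rho>"
    and action: "group_action G M a"
    and continuous_action:
      "continuous_map
         (prod_topology (Metric_space.mtopology (carrier G) d) (Metric_space.mtopology M \<rho>))
         (Metric_space.mtopology M \<rho>) (\<lambda>(g, y). a g y)"
begin

sublocale \<rho>: Metric_space M \<rho>
  by (fact metric_space)

lemma action_closed: "g \<in> carrier G \<Longrightarrow> x \<in> M \<Longrightarrow> a g x \<in> M"
  using group_action.element_image[OF action] by blast

lemma action_mult: "x \<in> M \<Longrightarrow> g \<in> carrier G \<Longrightarrow> h \<in> carrier G \<Longrightarrow> a (g \<otimes> h) x = a g (a h x)"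
  by (rule group_action.composition_rule[OF action])

lemma action_one: "x \<in> M \<Longrightarrow> a \<one> x = x"
  using fun_cong[OF group_action.id_eq_one[OF action], of x] by simp

lemma action_inv_cancel:
  assumes "x \<in> M" "k \<in> carrier G"
  shows "a (inv k) (a k x) = x"
proof -
  have "a (inv k) (a k x) = a (inv k \<otimes> k) x"
    using assms by (intro action_mult[symmetric]) auto
  also have "\<dots> = x"
    using assms by (simp add: action_one)
  finally show ?thesis .
qed

lemma action_mult_inv:
  assumes "y \<in> M" "g \<in> carrier G" "h \<in> carrier G"
  shows "a (g \<otimes> inv h) (a h y) = a g y"
proof -
  have "a (g \<otimes> inv h) (a h y) = a (g \<otimes> inv h \<otimes> h) y"
    using assms by (intro action_mult[symmetric]) auto
  also have "g \<otimes> inv h \<otimes> h = g"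
    using assms by (simp add: m_assoc)
  finally show ?thesis .
qed

lemma continuous_map_action:
  assumes "g \<in> carrier G"
  shows "continuous_map \<rho>.mtopology \<rho>.mtopology (a g)"
proof -
  have "continuous_map \<rho>.mtopology (prod_topology d.mtopology \<rho>.mtopology) (\<lambda>y. (g, y))"
    using assms by (simp add: continuous_map_paired)
  from continuous_map_compose[OF this continuous_action] show ?thesis
    by (simp add: o_def)
qed

lemma action_near_identity:
  assumes U: "openin \<rho>.mtopology U" and z: "z \<in> U"
  obtains \<theta> r where "0 < \<theta>" "0 < r"
    "\<And>g w. g \<in> carrier G \<Longrightarrow> w \<in> M \<Longrightarrow> d g \<one> < \<theta> \<Longrightarrow> \<rho> z w < r \<Longrightarrow> a g w \<in> U"
proof -
  let ?GY = "prod_topology d.mtopology \<rho>.mtopology"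
  define S where "S = {x \<in> topspace ?GY. (\<lambda>(g, y). a g y) x \<in> U}"
  have zM: "z \<in> M"
    using openin_subset[OF U] z by auto
  have "openin ?GY S"
    unfolding S_def by (rule openin_continuous_map_preimage[OF continuous_action U])
  moreover have "(\<one>, z) \<in> S"
    unfolding S_def using z zM by (simp add: action_one)
  ultimately have "\<exists>V W. openin d.mtopology V \<and> openin \<rho>.mtopology W \<and> \<one> \<in> V \<and> z \<in> W \<and> V \<times> W \<subseteq> S"
    by (simp add: openin_prod_topology_alt)
  then obtain V W where "openin d.mtopology V" "openin \<rho>.mtopology W" "\<one> \<in> V" "z \<in> W"
    and VW: "V \<times> W \<subseteq> S"
    by blast
  obtain \<theta> where \<theta>: "0 < \<theta>" "d.mball \<one> \<theta> \<subseteq> V"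
    using \<open>openin d.mtopology V\<close> \<open>\<one> \<in> V\<close> d.openin_mtopology by blast
  obtain r where r: "0 < r" "\<rho>.mball z r \<subseteq> W"
    using \<open>openin \<rho>.mtopology W\<close> \<open>z \<in> W\<close> \<rho>.openin_mtopology by blast
  show thesis
  proof (rule that[OF \<theta>(1) r(1)])
    fix g w assume "g \<in> carrier G" "w \<in> M" "d g \<one> < \<theta>" "\<rho> z w < r"
    then have "g \<in> d.mball \<one> \<theta>" "w \<in> \<rho>.mball z r"
      using zM d.commute[of \<one> g] by simp_all
    then have "(g, w) \<in> S"
      using \<theta>(2) r(2) VW by blast
    then show "a g w \<in> U"
      unfolding S_def by simp
  qed
qed

subsection \<open>Infimal convolution along orbits\<close>

definition orbit_lipschitz :: "('y \<Rightarrow> real) \<Rightarrow> bool" where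
  "orbit_lipschitz P \<longleftrightarrow> (\<forall>w\<in>M. \<forall>k\<in>carrier G. \<bar>P (a k w) - P w\<bar> \<le> d k \<one>)"

lemma orbit_lipschitzD:
  assumes "orbit_lipschitz P" "w \<in> M" "k \<in> carrier G"
  shows "P w \<le> P (a k w) + d k \<one>"
proof -
  have "\<bar>P (a k w) - P w\<bar> \<le> d k \<one>"
    using assms unfolding orbit_lipschitz_def by blast
  then show ?thesis
    by (simp add: abs_le_iff)
qed

lemma orbit_lipschitzI:
  assumes "\<And>w k. w \<in> M \<Longrightarrow> k \<in> carrier G \<Longrightarrow> P w \<le> P (a k w) + d k \<one>"
  shows "orbit_lipschitz P"
  unfolding orbit_lipschitz_def
proof (intro ballI)
  fix w k assume w: "w \<in> M" and k: "k \<in> carrier G"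
  have "P (a k w) \<le> P (a (inv k) (a k w)) + d (inv k) \<one>"
    using assms[OF action_closed[OF k w] inv_closed[OF k]] .
  then have "P (a k w) \<le> P w + d k \<one>"
    by (simp only: action_inv_cancel[OF w k] dist_inv_one[OF k])
  with assms[OF w k] show "\<bar>P (a k w) - P w\<bar> \<le> d k \<one>"
    by (simp add: abs_le_iff)
qed

lemma orbit_lipschitz_const: "orbit_lipschitz (\<lambda>z. c)"
  by (simp add: orbit_lipschitz_def)

lemma orbit_lipschitz_minus: "orbit_lipschitz P \<Longrightarrow> orbit_lipschitz (\<lambda>z. - P z)"
  unfolding orbit_lipschitz_def by (simp add: abs_minus_commute)

lemma orbit_lipschitz_clamp:
  assumes "orbit_lipschitz P"
  shows "orbit_lipschitz (\<lambda>z. clamp (b + P z))"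
  unfolding orbit_lipschitz_def
proof (intro ballI)
  fix w k assume "w \<in> M" "k \<in> carrier G"
  then have "\<bar>P (a k w) - P w\<bar> \<le> d k \<one>"
    using assms unfolding orbit_lipschitz_def by blast
  moreover have "\<bar>clamp (b + P (a k w)) - clamp (b + P w)\<bar> \<le> \<bar>P (a k w) - P w\<bar>"
    using clamp_dist_le[of "b + P (a k w)" "b + P w"] by simp
  ultimately show "\<bar>clamp (b + P (a k w)) - clamp (b + P w)\<bar> \<le> d k \<one>"
    by linarith
qed

lemma orbit_lipschitz_lipschitz:
  assumes "orbit_lipschitz P" "y \<in> M" "g \<in> carrier G" "h \<in> carrier G"
  shows "\<bar>P (a g y) - P (a h y)\<bar> \<le> d g h"
proof -
  have "\<bar>P (a (g \<otimes> inv h) (a h y)) - P (a h y)\<bar> \<le> d (g \<otimes> inv h) \<one>"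
    using assms action_closed[of h y] unfolding orbit_lipschitz_def by blast
  then show ?thesis
    using assms by (simp add: action_mult_inv dist_mult_inv_one)
qed

(* The largest orbit-Lipschitz minorant of f, cf. orbit_lipschitz_le_inf_conv. *)
definition inf_conv :: "('y \<Rightarrow> real) \<Rightarrow> 'y \<Rightarrow> real" where
  "inf_conv f z = (INF g\<in>carrier G. f (a g z) + d g \<one>)"

lemma le_inf_conv: "(\<And>g. g \<in> carrier G \<Longrightarrow> c \<le> f (a g z) + d g \<one>) \<Longrightarrow> c \<le> inf_conv f z"
  unfolding inf_conv_def by (rule cINF_greatest) auto

lemma orbit_lipschitz_le_inf_conv:
  assumes "orbit_lipschitz \<phi>" "\<And>w. w \<in> M \<Longrightarrow> \<phi> w \<le> f w" "z \<in> M"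
  shows "\<phi> z \<le> inf_conv f z"
proof (rule le_inf_conv)
  fix g assume "g \<in> carrier G"
  then show "\<phi> z \<le> f (a g z) + d g \<one>"
    using assms orbit_lipschitzD[of \<phi> z g] action_closed by fastforce
qed

context
  fixes f :: "'y \<Rightarrow> real" and lo :: real
  assumes bounded_below: "\<And>w. w \<in> M \<Longrightarrow> lo \<le> f w"
begin

lemma lower_le_inf_conv_term:
  assumes "z \<in> M" "g \<in> carrier G"
  shows "lo \<le> f (a g z) + d g \<one>"
  using bounded_below[OF action_closed[OF assms(2,1)]] d.nonneg[of g \<one>] by linarith

lemma inf_conv_le: "z \<in> M \<Longrightarrow> g \<in> carrier G \<Longrightarrow> inf_conv f z \<le> f (a g z) + d g \<one>"
  unfolding inf_conv_def
  by (rule cINF_lower) (auto intro!: bdd_belowI2[where m=lo] lower_le_inf_conv_term)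

lemma inf_conv_le_self: "z \<in> M \<Longrightarrow> inf_conv f z \<le> f z"
  using inf_conv_le[of z \<one>] by (simp add: action_one)

lemma inf_conv_lower: "z \<in> M \<Longrightarrow> lo \<le> inf_conv f z"
  by (rule le_inf_conv) (rule lower_le_inf_conv_term)

lemma inf_conv_less_iff: "z \<in> M \<Longrightarrow> inf_conv f z < c \<longleftrightarrow> (\<exists>g\<in>carrier G. f (a g z) + d g \<one> < c)"
  unfolding inf_conv_def
  by (rule cINF_less_iff) (auto intro!: bdd_belowI2[where m=lo] lower_le_inf_conv_term)

lemma orbit_lipschitz_inf_conv: "orbit_lipschitz (inf_conv f)"
proof (rule orbit_lipschitzI)
  fix w k assume w: "w \<in> M" and k: "k \<in> carrier G"
  have "inf_conv f w - d k \<one> \<le> inf_conv f (a k w)"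
  proof (rule le_inf_conv)
    fix h assume h: "h \<in> carrier G"
    have "inf_conv f w \<le> f (a h (a k w)) + d (h \<otimes> k) \<one>"
      using inf_conv_le[of w "h \<otimes> k"] w h k by (simp add: action_mult)
    also have "\<dots> \<le> f (a h (a k w)) + d h \<one> + d k \<one>"
      using dist_mult_one_le[OF h k] by simp
    finally show "inf_conv f w - d k \<one> \<le> f (a h (a k w)) + d h \<one>"
      by simp
  qed
  then show "inf_conv f w \<le> inf_conv f (a k w) + d k \<one>"
    by simp
qed

lemma upper_semicontinuous_inf_conv:
  assumes "continuous_map \<rho>.mtopology euclideanreal f"
  shows "upper_semicontinuous_map \<rho>.mtopology (inf_conv f)"
  unfolding inf_conv_def
proof (rule upper_semicontinuous_map_INF)
  fix g assume "g \<in> carrier G"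
  then have "continuous_map \<rho>.mtopology euclideanreal (\<lambda>z. f (a g z))"
    using continuous_map_compose[OF continuous_map_action assms] by (simp add: o_def)
  then have "continuous_map \<rho>.mtopology euclideanreal (\<lambda>z. f (a g z) + d g \<one>)"
    by (rule continuous_map_add) simp
  then show "upper_semicontinuous_map \<rho>.mtopology (\<lambda>z. f (a g z) + d g \<one>)"
    by (rule continuous_map_imp_upper_semicontinuous_map)
qed (auto intro!: bdd_belowI2[where m=lo] lower_le_inf_conv_term)

end

definition admissible :: "('y \<Rightarrow> real) \<Rightarrow> bool" where
  "admissible P \<longleftrightarrow> (\<forall>z\<in>M. 0 \<le> P z \<and> P z \<le> 1)
     \<and> upper_semicontinuous_map \<rho>.mtopology P \<and> orbit_lipschitz P"

lemma admissible_const: "0 \<le> c \<Longrightarrow> c \<le> 1 \<Longrightarrow> admissible (\<lambda>z. c)"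
  by (simp add: admissible_def upper_semicontinuous_map_const orbit_lipschitz_const)

lemma admissible_clamp_inf_conv:
  assumes "continuous_map \<rho>.mtopology euclideanreal f" "\<And>w. w \<in> M \<Longrightarrow> lo \<le> f w"
  shows "admissible (\<lambda>z. clamp (b + inf_conv f z))"
proof -
  have usc: "upper_semicontinuous_map \<rho>.mtopology (inf_conv f)"
    by (rule upper_semicontinuous_inf_conv[where f=f and lo=lo, OF assms(2,1)])
  have lip: "orbit_lipschitz (inf_conv f)"
    by (rule orbit_lipschitz_inf_conv[where f=f and lo=lo, OF assms(2)])
  show ?thesis
    unfolding admissible_def
    using clamp_bounds upper_semicontinuous_map_clamp[OF usc] orbit_lipschitz_clamp[OF lip] by simp
qed

lemma admissible_inf_conv:
  assumes "continuous_map \<rho>.mtopology euclideanreal f" "\<And>w. w \<in> M \<Longrightarrow> 0 \<le> f w \<and> f w \<le> 1"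
  shows "admissible (inf_conv f)"
proof -
  have lo: "\<And>w. w \<in> M \<Longrightarrow> 0 \<le> f w"
    using assms(2) by blast
  have "0 \<le> inf_conv f z \<and> inf_conv f z \<le> 1" if "z \<in> M" for z
    using inf_conv_lower[where f=f and lo=0, OF lo that]
      inf_conv_le_self[where f=f and lo=0, OF lo that] assms(2)[OF that]
    by linarith
  then show ?thesis
    unfolding admissible_def
    using upper_semicontinuous_inf_conv[where f=f and lo=0, OF lo assms(1)]
      orbit_lipschitz_inf_conv[where f=f and lo=0, OF lo] by simp
qed

lemma admissible_orbit_in_Lip_fun:
  assumes P: "admissible P" and y: "y \<in> M"
  shows "(\<lambda>g\<in>carrier G. P (a g y)) \<in> Lip_fun G d"
  unfolding Lip_fun_def
proof (intro CollectI conjI ballI)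
  fix g assume "g \<in> carrier G"
  then show "0 \<le> (\<lambda>g\<in>carrier G. P (a g y)) g" "(\<lambda>g\<in>carrier G. P (a g y)) g \<le> 1"
    using P y action_closed unfolding admissible_def by auto
next
  fix g h assume "g \<in> carrier G" "h \<in> carrier G"
  then show "\<bar>(\<lambda>g\<in>carrier G. P (a g y)) g - (\<lambda>g\<in>carrier G. P (a g y)) h\<bar> \<le> d g h"
    using P y orbit_lipschitz_lipschitz unfolding admissible_def by simp
qed simp

end

section \<open>Bumps around a countable family of balls\<close>

locale separable_metric_G_space = metric_G_space G d M \<rho> a
  for G :: "('g, 'b) monoid_scheme" (structure) and d :: "'g \<Rightarrow> 'g \<Rightarrow> real"
    and M :: "'y set" and \<rho> :: "'y \<Rightarrow> 'y \<Rightarrow> real" and a :: "'g \<Rightarrow> 'y \<Rightarrow> 'y" +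
  fixes cen :: "nat \<Rightarrow> 'y"
  assumes cen_in: "M \<noteq> {} \<Longrightarrow> cen i \<in> M" \<comment> \<open>so that the empty space is included\<close>
    and cen_dense: "z \<in> M \<Longrightarrow> 0 < e \<Longrightarrow> \<exists>i. \<rho> (cen i) z < e"
begin

definition ctr :: "nat \<Rightarrow> 'y" where
  "ctr m = cen (fst (prod_decode m))"

definition rad :: "nat \<Rightarrow> real" where
  "rad m = inverse (real (Suc (snd (prod_decode m))))"

lemma ctr_in: "M \<noteq> {} \<Longrightarrow> ctr m \<in> M"
  by (simp add: ctr_def cen_in)

lemma rad_pos: "0 < rad m"
  by (simp add: rad_def)

lemma small_ball_around:
  assumes "z \<in> M" "0 < R"
  obtains m where "\<rho> (ctr m) z < rad m" "\<And>w. w \<in> M \<Longrightarrow> \<rho> (ctr m) w < 2 * rad m \<Longrightarrow> \<rho> z w < R"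
proof -
  obtain j where j: "inverse (real (Suc j)) < R / 3"
    using reals_Archimedean[of "R / 3"] assms(2) by auto
  obtain i where i: "\<rho> (cen i) z < inverse (real (Suc j))"
    using cen_dense[OF assms(1)]
    by (meson inverse_positive_iff_positive of_nat_0_less_iff zero_less_Suc)
  have cen_i: "cen i \<in> M"
    using cen_in assms(1) by blast
  define m where "m = prod_encode (i, j)"
  have ctr_m: "ctr m = cen i" and rad_m: "rad m = inverse (real (Suc j))"
    by (simp_all add: m_def ctr_def rad_def)
  show thesis
  proof (rule that)
    show "\<rho> (ctr m) z < rad m"
      using i by (simp add: ctr_m rad_m)
    fix w assume "w \<in> M" "\<rho> (ctr m) w < 2 * rad m"
    moreover have "\<rho> z w \<le> \<rho> z (cen i) + \<rho> (cen i) w"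
      using \<rho>.triangle[OF assms(1) cen_i \<open>w \<in> M\<close>] .
    ultimately show "\<rho> z w < R"
      using i j \<rho>.commute[of z "cen i"] by (simp add: ctr_m rad_m)
  qed
qed

definition bump :: "nat \<Rightarrow> 'y \<Rightarrow> real" where
  "bump m w = min 1 (max 0 (\<rho> (ctr m) w / rad m - 1))"

lemma continuous_bump: "continuous_map \<rho>.mtopology euclideanreal (bump m)"
proof (cases "M = {}")
  case False
  then have "continuous_map \<rho>.mtopology euclideanreal (\<rho> (ctr m))"
    using continuous_on_mdist[of "ctr m" "metric (M, \<rho>)"] ctr_in[OF False] by simp
  then show ?thesis
    unfolding bump_def divide_inverse
    by (intro continuous_intros continuous_map_real_mult_right)
next
  case True
  have "topspace \<rho>.mtopology = {}"
    using trans[OF \<rho>.topspace_mtopology True] .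
  then show ?thesis
    by (metis continuous_map_on_empty null_topspace_iff_trivial)
qed

lemma bump_bounds: "0 \<le> bump m w" "bump m w \<le> 1"
  by (auto simp: bump_def)

lemma bump_eq_0: "\<rho> (ctr m) w \<le> rad m \<Longrightarrow> bump m w = 0"
  using rad_pos[of m] by (auto simp: bump_def field_simps)

lemma bump_eq_1: "2 * rad m \<le> \<rho> (ctr m) w \<Longrightarrow> bump m w = 1"
  using rad_pos[of m] by (auto simp: bump_def field_simps)

definition signed_bump :: "real \<Rightarrow> nat \<Rightarrow> 'y \<Rightarrow> real" where
  "signed_bump q m w = q * (2 * bump m w - 1)"

lemma continuous_signed_bump: "continuous_map \<rho>.mtopology euclideanreal (signed_bump q m)"
  unfolding signed_bump_def
  by (intro continuous_intros continuous_map_real_mult_left continuous_bump)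

lemma signed_bump_lower: "- \<bar>q\<bar> \<le> signed_bump q m w"
proof -
  have "\<bar>2 * bump m w - 1\<bar> \<le> 1"
    using bump_bounds[of m w] by simp
  then have "\<bar>signed_bump q m w\<bar> \<le> \<bar>q\<bar>"
    unfolding signed_bump_def abs_mult by (simp add: mult_left_le)
  then show ?thesis
    by linarith
qed

lemma signed_bump_inner: "\<rho> (ctr m) w \<le> rad m \<Longrightarrow> signed_bump q m w = - q"
  by (simp add: signed_bump_def bump_eq_0)

lemma signed_bump_outer: "2 * rad m \<le> \<rho> (ctr m) w \<Longrightarrow> signed_bump q m w = q"
  by (simp add: signed_bump_def bump_eq_1)

lemma inf_conv_signed_bump_lower: "z \<in> M \<Longrightarrow> - \<bar>q\<bar> \<le> inf_conv (signed_bump q m) z"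
  by (rule inf_conv_lower[where lo="- \<bar>q\<bar>"]) (simp_all add: signed_bump_lower)

lemma inf_conv_signed_bump_le: "z \<in> M \<Longrightarrow> inf_conv (signed_bump q m) z \<le> signed_bump q m z"
  by (rule inf_conv_le_self[where lo="- \<bar>q\<bar>"]) (simp_all add: signed_bump_lower)

lemma orbit_lipschitz_inf_conv_signed_bump: "orbit_lipschitz (inf_conv (signed_bump q m))"
  by (rule orbit_lipschitz_inf_conv[where lo="- \<bar>q\<bar>"]) (simp add: signed_bump_lower)

section \<open>The coordinate functions\<close>

definition linked_balls :: "('y \<Rightarrow> real) \<Rightarrow> real \<Rightarrow> real \<Rightarrow> nat \<Rightarrow> nat \<Rightarrow> bool" where
  "linked_balls P q0 q2 m n \<longleftrightarrow>
     (\<forall>w\<in>M. \<rho> (ctr m) w < 2 * rad m \<longrightarrow> P w < q0) \<and>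
     (\<forall>w\<in>M. \<forall>g\<in>carrier G.
        \<rho> (ctr n) w < 2 * rad n \<longrightarrow> d g \<one> < 2 * q2 \<longrightarrow> \<rho> (ctr m) (a g w) \<le> rad m)"

(* For balls not linked to P, the constants 0 and 1 satisfy (1) and (2) trivially. *)
definition t_fun :: "('y \<Rightarrow> real) \<Rightarrow> real \<Rightarrow> real \<Rightarrow> real \<Rightarrow> nat \<Rightarrow> nat \<Rightarrow> 'y \<Rightarrow> real" where
  "t_fun P q0 q1 q2 m n =
     (if linked_balls P q0 q2 m n then (\<lambda>z. clamp (q1 + inf_conv (signed_bump (- q2) m) z))
      else (\<lambda>z. 0))"

definition u_fun :: "('y \<Rightarrow> real) \<Rightarrow> real \<Rightarrow> real \<Rightarrow> real \<Rightarrow> nat \<Rightarrow> nat \<Rightarrow> 'y \<Rightarrow> real" where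
  "u_fun P q0 q1 q2 m n =
     (if linked_balls P q0 q2 m n then (\<lambda>z. clamp (q2 + inf_conv (signed_bump q2 n) z))
      else (\<lambda>z. 1))"

definition ball_fun :: "nat \<Rightarrow> 'y \<Rightarrow> real" where
  "ball_fun m = inf_conv (bump m)"

lemma admissible_t_fun: "admissible (t_fun P q0 q1 q2 m n)"
proof -
  have "admissible (\<lambda>z. clamp (q1 + inf_conv (signed_bump (- q2) m) z))"
    by (rule admissible_clamp_inf_conv[where lo="- \<bar>- q2\<bar>"])
      (rule continuous_signed_bump, rule signed_bump_lower)
  then show ?thesis
    by (simp add: t_fun_def admissible_const)
qed

lemma admissible_u_fun: "admissible (u_fun P q0 q1 q2 m n)"
proof -
  have "admissible (\<lambda>z. clamp (q2 + inf_conv (signed_bump q2 n) z))"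
    by (rule admissible_clamp_inf_conv[where lo="- \<bar>q2\<bar>"])
      (rule continuous_signed_bump, rule signed_bump_lower)
  then show ?thesis
    by (simp add: u_fun_def admissible_const)
qed

lemma admissible_ball_fun: "admissible (ball_fun m)"
  unfolding ball_fun_def by (rule admissible_inf_conv[OF continuous_bump]) (simp add: bump_bounds)

lemma linked_balls_inf_conv_le:
  assumes linked: "linked_balls P q0 q2 m n" and q2: "0 < q2" and z: "z \<in> M"
  shows "- inf_conv (signed_bump (- q2) m) z \<le> inf_conv (signed_bump q2 n) z"
proof (rule orbit_lipschitz_le_inf_conv[where \<phi>="\<lambda>w. - inf_conv (signed_bump (- q2) m) w",
      OF _ _ z])
  show "orbit_lipschitz (\<lambda>w. - inf_conv (signed_bump (- q2) m) w)"
    by (rule orbit_lipschitz_minus[OF orbit_lipschitz_inf_conv_signed_bump])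
  fix w assume w: "w \<in> M"
  show "- inf_conv (signed_bump (- q2) m) w \<le> signed_bump q2 n w"
  proof (cases "\<rho> (ctr n) w < 2 * rad n")
    case True
    have "q2 \<le> inf_conv (signed_bump (- q2) m) w"
    proof (rule le_inf_conv)
      fix g assume g: "g \<in> carrier G"
      show "q2 \<le> signed_bump (- q2) m (a g w) + d g \<one>"
      proof (cases "d g \<one> < 2 * q2")
        case True
        with linked w g \<open>\<rho> (ctr n) w < 2 * rad n\<close> have "\<rho> (ctr m) (a g w) \<le> rad m"
          unfolding linked_balls_def by blast
        then show ?thesis
          using d.nonneg[of g \<one>] by (simp add: signed_bump_inner)
      next
        case False
        then show ?thesis
          using signed_bump_lower[of "- q2" m "a g w"] q2 by simp
      qed
    qed
    then show ?thesis
      using signed_bump_lower[of q2 n w] q2 by simp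
  next
    case False
    then show ?thesis
      using inf_conv_signed_bump_lower[OF w, of "- q2" m] q2 by (simp add: signed_bump_outer)
  qed
qed

lemma t_fun_condition:
  assumes z: "z \<in> M" and e: "0 < e" "e < q2" "e < q1"
  shows "t_fun P q0 q1 q2 m n z < q1 - e \<or> P z \<le> q0 + e"
proof (cases "linked_balls P q0 q2 m n \<and> q0 + e < P z")
  case True
  have "\<not> \<rho> (ctr m) z < 2 * rad m"
  proof
    assume "\<rho> (ctr m) z < 2 * rad m"
    then have "P z < q0"
      using True z unfolding linked_balls_def by blast
    with True e show False
      by linarith
  qed
  then have "inf_conv (signed_bump (- q2) m) z \<le> - q2"
    using inf_conv_signed_bump_le[OF z, of "- q2" m] by (simp add: signed_bump_outer)
  then have "t_fun P q0 q1 q2 m n z < q1 - e"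
    using True e by (simp add: t_fun_def clamp_less_iff)
  then show ?thesis ..
next
  case False
  then show ?thesis
    using e by (auto simp: t_fun_def)
qed

lemma u_fun_t_fun_condition:
  assumes z: "z \<in> M" and e: "0 < e" "e < q2" "q1 - e \<le> 1" "q2 + e \<le> 1"
  shows "q2 + e \<le> u_fun P q0 q1 q2 m n z \<or> q1 - e \<le> t_fun P q0 q1 q2 m n z"
proof (cases "linked_balls P q0 q2 m n")
  case True
  let ?D = "inf_conv (signed_bump (- q2) m) z" and ?E = "inf_conv (signed_bump q2 n) z"
  show ?thesis
  proof (rule disjCI)
    assume "\<not> q1 - e \<le> t_fun P q0 q1 q2 m n z"
    then have "\<not> q1 - e \<le> clamp (q1 + ?D)"
      using True by (simp add: t_fun_def)
    then have "?D < - e"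
      using le_clamp[OF e(3), of "q1 + ?D"] by linarith
    moreover have "- ?D \<le> ?E"
      using linked_balls_inf_conv_le[OF True _ z] e by linarith
    ultimately have "q2 + e \<le> clamp (q2 + ?E)"
      using le_clamp[OF e(4)] by simp
    then show "q2 + e \<le> u_fun P q0 q1 q2 m n z"
      using True by (simp add: u_fun_def)
  qed
next
  case False
  then show ?thesis
    using e by (simp add: u_fun_def)
qed

lemma u_fun_below:
  assumes P: "upper_semicontinuous_map \<rho>.mtopology P" and z: "z \<in> M"
    and q0: "0 < q0" and Pz: "P z < of_rat q0"
  obtains q1 q2 :: rat and m n where "0 < q2" "q2 < q1" "q1 < q0"
    "u_fun P (of_rat q0) (of_rat q1) (of_rat q2) m n z < of_rat q2"
proof -
  define V where "V = {w \<in> M. P w < of_rat q0}"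
  have "openin \<rho>.mtopology V"
    using P[unfolded upper_semicontinuous_map_def, rule_format, of "of_rat q0"] by (simp add: V_def)
  then have "\<forall>x. x \<in> V \<longrightarrow> (\<exists>r>0. \<rho>.mball x r \<subseteq> V)"
    by (simp add: \<rho>.openin_mtopology)
  moreover have "z \<in> V"
    using z Pz by (simp add: V_def)
  ultimately obtain R where R: "0 < R" "\<rho>.mball z R \<subseteq> V"
    by blast
  obtain m where m: "\<rho> (ctr m) z < rad m"
    and m_sub: "\<And>w. w \<in> M \<Longrightarrow> \<rho> (ctr m) w < 2 * rad m \<Longrightarrow> \<rho> z w < R"
    by (rule small_ball_around[OF z R(1)]) blast
  have "z \<in> \<rho>.mball (ctr m) (rad m)"
    using m z ctr_in[of m] by auto
  then obtain \<theta> r where \<theta>: "0 < \<theta>" and r: "0 < r"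
    and near: "\<And>g w. g \<in> carrier G \<Longrightarrow> w \<in> M \<Longrightarrow> d g \<one> < \<theta> \<Longrightarrow> \<rho> z w < r
                 \<Longrightarrow> a g w \<in> \<rho>.mball (ctr m) (rad m)"
    by (rule action_near_identity[OF \<rho>.openin_mball]) blast
  have "0 < min (\<theta> / 2) (of_rat q0)"
    using \<theta> q0 by simp
  from of_rat_dense[OF this] obtain q2 :: rat
    where "0 < (of_rat q2 :: real)" "of_rat q2 < min (\<theta> / 2) (of_rat q0)"
    by blast
  then have q2: "0 < (of_rat q2 :: real)" "2 * of_rat q2 < \<theta>" "q2 < q0"
    by (simp_all add: of_rat_less)
  obtain n where n: "\<rho> (ctr n) z < rad n"
    and n_sub: "\<And>w. w \<in> M \<Longrightarrow> \<rho> (ctr n) w < 2 * rad n \<Longrightarrow> \<rho> z w < r"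
    by (rule small_ball_around[OF z r]) blast
  have linked: "linked_balls P (of_rat q0) (of_rat q2) m n"
    unfolding linked_balls_def
  proof (intro conjI ballI impI)
    fix w assume w: "w \<in> M" and "\<rho> (ctr m) w < 2 * rad m"
    then have "w \<in> \<rho>.mball z R"
      using m_sub z by simp
    then show "P w < of_rat q0"
      using R(2) by (simp add: V_def subset_iff)
  next
    fix w g assume w: "w \<in> M" and g: "g \<in> carrier G"
      and "\<rho> (ctr n) w < 2 * rad n" "d g \<one> < 2 * of_rat q2"
    then have "d g \<one> < \<theta>" "\<rho> z w < r"
      using q2(2) n_sub[OF w] by simp_all
    then have "a g w \<in> \<rho>.mball (ctr m) (rad m)"
      by (rule near[OF g w])
    then show "\<rho> (ctr m) (a g w) \<le> rad m"
      by simp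
  qed
  have "inf_conv (signed_bump (of_rat q2) n) z \<le> - of_rat q2"
    using inf_conv_signed_bump_le[OF z, of "of_rat q2" n] n by (simp add: signed_bump_inner)
  then have "of_rat q2 + inf_conv (signed_bump (of_rat q2) n) z < of_rat q2"
    using q2(1) by linarith
  then have "u_fun P (of_rat q0) (of_rat ((q0 + q2) / 2)) (of_rat q2) m n z < of_rat q2"
    using linked q2(1) by (simp add: u_fun_def clamp_less_iff)
  moreover have "0 < q2" "q2 < (q0 + q2) / 2" "(q0 + q2) / 2 < q0"
    using q2(1,3) by simp_all
  ultimately show thesis
    by (intro that)
qed

lemma ball_fun_basis:
  assumes U: "openin \<rho>.mtopology U" and y: "y \<in> U"
  obtains m and q :: rat where "ball_fun m y < of_rat q" "{z \<in> M. ball_fun m z < of_rat q} \<subseteq> U"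
proof -
  have yM: "y \<in> M"
    using openin_subset[OF U] y by auto
  obtain \<theta> r where \<theta>: "0 < \<theta>" and r: "0 < r"
    and near: "\<And>g w. g \<in> carrier G \<Longrightarrow> w \<in> M \<Longrightarrow> d g \<one> < \<theta> \<Longrightarrow> \<rho> y w < r \<Longrightarrow> a g w \<in> U"
    by (rule action_near_identity[OF U y]) blast
  obtain m where m: "\<rho> (ctr m) y < rad m"
    and m_sub: "\<And>w. w \<in> M \<Longrightarrow> \<rho> (ctr m) w < 2 * rad m \<Longrightarrow> \<rho> y w < r"
    by (rule small_ball_around[OF yM r]) blast
  have "0 < min \<theta> 1"
    using \<theta> by simp
  from of_rat_dense[OF this] obtain q :: rat where "0 < (of_rat q :: real)" "of_rat q < min \<theta> 1"
    by blast
  then have q: "0 < (of_rat q :: real)" "of_rat q < \<theta>" "of_rat q < (1 :: real)"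
    by simp_all
  have bump_nonneg: "\<And>w. w \<in> M \<Longrightarrow> 0 \<le> bump m w"
    by (simp add: bump_bounds)
  have "ball_fun m y \<le> bump m y"
    unfolding ball_fun_def by (rule inf_conv_le_self[where f="bump m" and lo=0, OF bump_nonneg yM])
  also have "bump m y = 0"
    using m by (simp add: bump_eq_0)
  finally have "ball_fun m y < of_rat q"
    using q(1) by linarith
  moreover have "{z \<in> M. ball_fun m z < of_rat q} \<subseteq> U"
  proof
    fix z assume "z \<in> {z \<in> M. ball_fun m z < of_rat q}"
    then have z: "z \<in> M" and "inf_conv (bump m) z < of_rat q"
      by (simp_all add: ball_fun_def)
    then have "\<exists>h\<in>carrier G. bump m (a h z) + d h \<one> < of_rat q"
      by (simp add: inf_conv_less_iff[where f="bump m" and lo=0, OF bump_nonneg z])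
    then obtain h where h: "h \<in> carrier G" and small: "bump m (a h z) + d h \<one> < of_rat q"
      by blast
    have "bump m (a h z) < 1"
      using small q(3) d.nonneg[of h \<one>] by linarith
    then have "\<rho> (ctr m) (a h z) < 2 * rad m"
      using bump_eq_1[of m "a h z"] by (cases "2 * rad m \<le> \<rho> (ctr m) (a h z)") simp_all
    then have "\<rho> y (a h z) < r"
      by (rule m_sub[OF action_closed[OF h z]])
    moreover have "d (inv h) \<one> < \<theta>"
      using small q(2) bump_bounds(1)[of m "a h z"] dist_inv_one[OF h] by linarith
    ultimately have "a (inv h) (a h z) \<in> U"
      using near[OF inv_closed[OF h] action_closed[OF h z]] by blast
    then show "z \<in> U"
      using action_inv_cancel[OF z h] by simp
  qed
  ultimately show thesis
    by (rule that)
qed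

(* Sequences are read backwards: s q0 q1 q2 b m n is coded by b = 0 (t_fun) or b \<noteq> 0 (u_fun),
   a one-entry sequence [m] by the m-th ball, and every other sequence by the constant 0. *)
fun fam_rev :: "rat list \<Rightarrow> 'y \<Rightarrow> real" where
  "fam_rev (n # m # b # q2 # q1 # q0 # s) =
     (if b = 0 then t_fun else u_fun) (fam_rev s) (of_rat q0) (of_rat q1) (of_rat q2)
       (nat \<lfloor>m\<rfloor>) (nat \<lfloor>n\<rfloor>)"
| "fam_rev [m] = ball_fun (nat \<lfloor>m\<rfloor>)"
| "fam_rev _ = (\<lambda>z. 0)"

definition fam :: "rat list \<Rightarrow> 'y \<Rightarrow> real" where
  "fam s = fam_rev (rev s)"

lemma admissible_fam: "admissible (fam s)"
proof -
  have "admissible (fam_rev l)" for l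
    by (induction l rule: fam_rev.induct)
      (simp_all add: admissible_t_fun admissible_u_fun admissible_ball_fun admissible_const)
  then show ?thesis
    by (simp add: fam_def)
qed

lemma fam_snoc_t:
  "fam (s @ [q0, q1, q2, 0, of_nat m, of_nat n])
     = t_fun (fam s) (of_rat q0) (of_rat q1) (of_rat q2) m n"
  by (simp add: fam_def)

lemma fam_snoc_u:
  "fam (s @ [q0, q1, q2, 1, of_nat m, of_nat n])
     = u_fun (fam s) (of_rat q0) (of_rat q1) (of_rat q2) m n"
  by (simp add: fam_def)

lemma fam_single: "fam [of_nat m] = ball_fun m"
  by (simp add: fam_def)

section \<open>The embedding\<close>

definition emb :: "'y \<Rightarrow> rat list \<Rightarrow> 'g \<Rightarrow> real" where
  "emb y = (\<lambda>s. \<lambda>g\<in>carrier G. fam s (a g y))"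

lemma emb_action:
  assumes "g \<in> carrier G" "y \<in> M"
  shows "emb (a g y) = actX G g (emb y)"
  unfolding emb_def actX_def
proof (rule ext)
  fix s
  show "(\<lambda>h\<in>carrier G. fam s (a h (a g y)))
      = (\<lambda>h\<in>carrier G. (\<lambda>h\<in>carrier G. fam s (a h y)) (h \<otimes> g))"
    by (rule restrict_ext) (simp add: assms action_mult)
qed

lemma emb_condition1:
  assumes "g0 \<in> carrier G" "y \<in> M" "0 < \<epsilon>" "\<epsilon> < q2" "\<epsilon> < q1"
  shows "emb y (s @ [q0, q1, q2, 0, of_nat m, of_nat n]) g0 < of_rat (q1 - \<epsilon>)
    \<or> emb y s g0 \<le> of_rat (q0 + \<epsilon>)"
  using t_fun_condition[OF action_closed[OF assms(1,2)],
      of "of_rat \<epsilon>" "of_rat q2" "of_rat q1" "fam s" "of_rat q0" m n] assms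
  by (simp add: emb_def fam_snoc_t of_rat_add of_rat_diff of_rat_less)

lemma emb_condition2:
  assumes "g0 \<in> carrier G" "y \<in> M" "0 < \<epsilon>" "\<epsilon> < q2" "q1 - \<epsilon> \<le> 1" "q2 + \<epsilon> \<le> 1"
  shows "of_rat (q2 + \<epsilon>) \<le> emb y (s @ [q0, q1, q2, 1, of_nat m, of_nat n]) g0
    \<or> of_rat (q1 - \<epsilon>) \<le> emb y (s @ [q0, q1, q2, 0, of_nat m, of_nat n]) g0"
proof -
  have "of_rat q1 - of_rat \<epsilon> \<le> (1::real)" "of_rat q2 + of_rat \<epsilon> \<le> (1::real)"
    using assms(5,6) of_rat_less_eq[of "q1 - \<epsilon>" 1] of_rat_less_eq[of "q2 + \<epsilon>" 1]
    by (simp_all add: of_rat_add of_rat_diff)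
  then show ?thesis
    using u_fun_t_fun_condition[OF action_closed[OF assms(1,2)],
        of "of_rat \<epsilon>" "of_rat q2" "of_rat q1" "fam s" "of_rat q0" m n] assms(1-4)
    by (simp add: emb_def fam_snoc_t fam_snoc_u of_rat_add of_rat_diff of_rat_less)
qed

lemma emb_condition3:
  assumes "g0 \<in> carrier G" "y \<in> M" "0 < q0" "emb y s g0 < of_rat q0"
  obtains q1 q2 :: rat and m n :: nat where "0 < q2" "q2 < q1" "q1 < q0"
    "emb y (s @ [q0, q1, q2, 1, of_nat m, of_nat n]) g0 < of_rat q2"
proof -
  have "upper_semicontinuous_map \<rho>.mtopology (fam s)"
    using admissible_fam unfolding admissible_def by blast
  moreover have "fam s (a g0 y) < of_rat q0"
    using assms(1,4) by (simp add: emb_def)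
  ultimately obtain q1 q2 m n where q: "0 < q2" "q2 < q1" "q1 < q0"
    and u: "u_fun (fam s) (of_rat q0) (of_rat q1) (of_rat q2) m n (a g0 y) < of_rat q2"
    by (rule u_fun_below[OF _ action_closed[OF assms(1,2)] assms(3)]) blast
  from u have "emb y (s @ [q0, q1, q2, 1, of_nat m, of_nat n]) g0 < of_rat q2"
    using assms(1) by (simp add: emb_def fam_snoc_u)
  with q show thesis
    by (rule that)
qed

lemma emb_in_Xset:
  assumes G0: "G0 \<subseteq> carrier G" and y: "y \<in> M"
  shows "emb y \<in> Xset G d G0"
  unfolding Xset_def
proof (intro CollectI conjI allI ballI impI)
  fix s
  show "emb y s \<in> Lip_fun G d"
    unfolding emb_def by (rule admissible_orbit_in_Lip_fun[OF admissible_fam y])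
next
  fix s g0 m n q0 q1 q2 \<epsilon>
  assume "g0 \<in> G0" and "in01 q0 \<and> in01 q1 \<and> in01 q2 \<and> in01 \<epsilon> \<and> in01 (q0 - \<epsilon>) \<and> in01 (q0 + \<epsilon>)
    \<and> in01 (q1 - \<epsilon>) \<and> in01 (q1 + \<epsilon>) \<and> in01 (q2 - \<epsilon>) \<and> in01 (q2 + \<epsilon>)"
  then have "g0 \<in> carrier G" "0 < \<epsilon>" "\<epsilon> < q2" "\<epsilon> < q1"
    using G0 unfolding in01_def by auto
  then show "emb y (s @ [q0, q1, q2, 0, of_nat m, of_nat n]) g0 < of_rat (q1 - \<epsilon>)
      \<or> emb y s g0 \<le> of_rat (q0 + \<epsilon>)"
    by (intro emb_condition1[OF _ y])
next
  fix s g0 m n q0 q1 q2 \<epsilon>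
  assume "g0 \<in> G0" and "in01 q0 \<and> in01 q1 \<and> in01 q2 \<and> in01 \<epsilon> \<and> in01 (q0 - \<epsilon>) \<and> in01 (q0 + \<epsilon>)
    \<and> in01 (q1 - \<epsilon>) \<and> in01 (q1 + \<epsilon>) \<and> in01 (q2 - \<epsilon>) \<and> in01 (q2 + \<epsilon>)"
  then have "g0 \<in> carrier G" "0 < \<epsilon>" "\<epsilon> < q2" "q1 - \<epsilon> \<le> 1" "q2 + \<epsilon> \<le> 1"
    using G0 unfolding in01_def by auto
  then show "of_rat (q2 + \<epsilon>) \<le> emb y (s @ [q0, q1, q2, 1, of_nat m, of_nat n]) g0
      \<or> of_rat (q1 - \<epsilon>) \<le> emb y (s @ [q0, q1, q2, 0, of_nat m, of_nat n]) g0"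
    by (intro emb_condition2[OF _ y])
next
  fix s g0 q0 \<epsilon>
  assume g0: "g0 \<in> G0" and q: "in01 q0 \<and> in01 \<epsilon>" and less: "emb y s g0 < of_rat q0"
  have g0_carrier: "g0 \<in> carrier G" and "0 < q0" "q0 < 1" "0 < \<epsilon>"
    using g0 G0 q unfolding in01_def by auto
  obtain q1 q2 m n where "0 < q2" "q2 < q1" "q1 < q0"
    and "emb y (s @ [q0, q1, q2, 1, of_nat m, of_nat n]) g0 < of_rat q2"
    by (rule emb_condition3[OF g0_carrier y \<open>0 < q0\<close> less]) blast
  moreover have "d g0 g0 < of_rat \<epsilon>"
    using g0_carrier \<open>0 < \<epsilon>\<close> by simp
  ultimately show "\<exists>q1 q2. \<exists>g1\<in>G0. \<exists>m n. 0 < q2 \<and> q2 < q1 \<and> q1 < q0 \<and> q0 < 1 \<and> d g0 g1 < of_rat \<epsilon>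
      \<and> emb y (s @ [q0, q1, q2, 1, of_nat m, of_nat n]) g1 < of_rat q2"
    using g0 \<open>q0 < 1\<close>
    by (intro exI[of _ q1] exI[of _ q2] bexI[of _ g0] exI[of _ m] exI[of _ n] conjI)
qed

lemma continuous_map_emb:
  assumes G0: "G0 \<subseteq> carrier G" "\<one> \<in> G0"
  shows "continuous_map \<rho>.mtopology (Xtop G d G0) emb"
  unfolding Xtop_def
proof (rule continuous_on_generated_topo)
  fix U assume "U \<in> {{F \<in> Xset G d G0. F s g0 < of_rat q0} | s g0 q0. g0 \<in> G0}"
  then obtain s g0 q0 where g0: "g0 \<in> G0" and U: "U = {F \<in> Xset G d G0. F s g0 < of_rat q0}"
    by blast
  have g0_carrier: "g0 \<in> carrier G"
    using g0 G0(1) by blast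
  have "openin \<rho>.mtopology {z \<in> topspace \<rho>.mtopology. fam s z < of_rat q0}"
    using admissible_fam[of s] unfolding admissible_def upper_semicontinuous_map_def by blast
  then have "openin \<rho>.mtopology
      {y \<in> topspace \<rho>.mtopology. a g0 y \<in> {z \<in> topspace \<rho>.mtopology. fam s z < of_rat q0}}"
    by (rule openin_continuous_map_preimage[OF continuous_map_action[OF g0_carrier]])
  moreover have "emb -` U \<inter> topspace \<rho>.mtopology =
      {y \<in> topspace \<rho>.mtopology. a g0 y \<in> {z \<in> topspace \<rho>.mtopology. fam s z < of_rat q0}}"
    using emb_in_Xset[OF G0(1)] action_closed[OF g0_carrier] g0_carrier by (auto simp: U emb_def)
  ultimately show "openin \<rho>.mtopology (emb -` U \<inter> topspace \<rho>.mtopology)"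
    by simp
next
  show "emb ` topspace \<rho>.mtopology \<subseteq> \<Union> {{F \<in> Xset G d G0. F s g0 < of_rat q0} | s g0 q0. g0 \<in> G0}"
  proof
    fix F assume "F \<in> emb ` topspace \<rho>.mtopology"
    then obtain y where y: "y \<in> M" and F: "F = emb y"
      by auto
    have "fam [] (a \<one> y) \<le> 1"
      using admissible_fam[of "[]"] action_closed[OF one_closed y] unfolding admissible_def by blast
    then have "F \<in> {F \<in> Xset G d G0. F [] \<one> < of_rat 2}"
      using emb_in_Xset[OF G0(1) y] by (simp add: F emb_def)
    then show "F \<in> \<Union> {{F \<in> Xset G d G0. F s g0 < of_rat q0} | s g0 q0. g0 \<in> G0}"
      using G0(2) by blast
  qed
qed

lemma emb_pulls_back_opens:
  assumes G0: "G0 \<subseteq> carrier G" "\<one> \<in> G0" and U: "openin \<rho>.mtopology U"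
  shows "\<exists>V. openin (Xtop G d G0) V \<and> U = {y \<in> topspace \<rho>.mtopology. emb y \<in> V}"
  unfolding Xtop_def
proof (rule opens_are_preimages_topology_generated_by[OF _ U])
  fix U' y assume "openin \<rho>.mtopology U'" "y \<in> U'"
  then obtain m q
    where q: "ball_fun m y < of_rat q" and sub: "{z \<in> M. ball_fun m z < of_rat q} \<subseteq> U'"
    by (rule ball_fun_basis) blast
  let ?B = "{F \<in> Xset G d G0. F [of_nat m] \<one> < of_rat q}"
  have B: "emb z \<in> ?B \<longleftrightarrow> ball_fun m z < of_rat q" if "z \<in> M" for z
    using emb_in_Xset[OF G0(1) that] that by (simp add: emb_def fam_single action_one)
  have "y \<in> M"
    using \<open>openin \<rho>.mtopology U'\<close> \<open>y \<in> U'\<close> openin_subset by fastforce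
  then have "emb y \<in> ?B \<and> {z \<in> topspace \<rho>.mtopology. emb z \<in> ?B} \<subseteq> U'"
    using B q sub by auto
  moreover have "?B \<in> {{F \<in> Xset G d G0. F s g0 < of_rat q0} | s g0 q0. g0 \<in> G0}"
    using G0(2) by blast
  ultimately show "\<exists>B\<in>{{F \<in> Xset G d G0. F s g0 < of_rat q0} | s g0 q0. g0 \<in> G0}.
      emb y \<in> B \<and> {z \<in> topspace \<rho>.mtopology. emb z \<in> B} \<subseteq> U'"
    by blast
qed

lemma inj_on_emb:
  assumes "G0 \<subseteq> carrier G" "\<one> \<in> G0"
  shows "inj_on emb M"
  using inj_on_if_opens_are_preimages[OF Hausdorff_imp_t0_space[OF \<rho>.Hausdorff_space_mtopology]
      emb_pulls_back_opens[OF assms]]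
  by simp

lemma equivariant_embedding:
  assumes "G0 \<subseteq> carrier G" "\<one> \<in> G0"
  shows "\<exists>\<pi>. continuous_map \<rho>.mtopology (Xtop G d G0) \<pi>
           \<and> inj_on \<pi> (topspace \<rho>.mtopology)
           \<and> (\<forall>g\<in>carrier G. \<forall>y\<in>topspace \<rho>.mtopology. \<pi> (a g y) = actX G g (\<pi> y))
           \<and> (\<forall>U. openin \<rho>.mtopology U \<longrightarrow>
                 (\<exists>V. openin (Xtop G d G0) V \<and> U = {y \<in> topspace \<rho>.mtopology. \<pi> y \<in> V}))"
  using continuous_map_emb[OF assms] inj_on_emb[OF assms] emb_action emb_pulls_back_opens[OF assms]
  by (intro exI[of _ emb]) simp

end

lemma Polish_space_dense_sequence:
  assumes "Polish_space X"
  obtains M \<rho> and c :: "nat \<Rightarrow> 'a" where "Metric_space M \<rho>" "X = Metric_space.mtopology M \<rho>"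
    "\<And>i. M \<noteq> {} \<Longrightarrow> c i \<in> M" "\<And>z e. z \<in> M \<Longrightarrow> 0 < e \<Longrightarrow> \<exists>i. \<rho> (c i) z < e"
proof -
  obtain M \<rho> where ms: "Metric_space M \<rho>" and X: "X = Metric_space.mtopology M \<rho>"
    using assms(1) completely_metrizable_imp_metrizable_space
    unfolding Polish_space_def metrizable_space_def by blast
  then have top: "topspace X = M"
    by (simp add: Metric_space.topspace_mtopology)
  obtain C where C: "countable C" "C \<subseteq> M" "X closure_of C = M"
    using assms(1) unfolding Polish_space_def separable_space_def top by blast
  define c where "c = from_nat_into C"
  show thesis
  proof (rule that[OF ms X])
    fix i assume "M \<noteq> {}"
    then have "C \<noteq> {}"
      using C(3) by auto
    then show "c i \<in> M"
      using from_nat_into[OF \<open>C \<noteq> {}\<close>] C(2) by (auto simp: c_def)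
  next
    fix z and e :: real assume z: "z \<in> M" and e: "0 < e"
    have "openin X (Metric_space.mball M \<rho> z e)" "z \<in> Metric_space.mball M \<rho> z e"
      using ms z e by (simp_all add: X Metric_space.openin_mball Metric_space.centre_in_mball_iff)
    moreover have "z \<in> X closure_of C"
      using C(3) z by simp
    ultimately obtain x where x: "x \<in> C" "x \<in> Metric_space.mball M \<rho> z e"
      unfolding in_closure_of by blast
    then obtain i where "c i = x"
      using from_nat_into_surj[OF C(1)] by (auto simp: c_def)
    then show "\<exists>i. \<rho> (c i) z < e"
      using x(2) Metric_space.in_mball[OF ms] Metric_space.commute[OF ms] by metis
  qed
qed

theorem lemma2p13:
  fixes G :: "('g, 'b) monoid_scheme" (structure)
    and d :: "'g \<Rightarrow> 'g \<Rightarrow> real"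
    and G0 :: "'g set"
    and TY :: "'y topology"
    and a :: "'g \<Rightarrow> 'y \<Rightarrow> 'y"
  assumes "group G"
    and "Metric_space (carrier G) d"
    and "\<forall>x\<in>carrier G. \<forall>y\<in>carrier G. \<forall>h\<in>carrier G. d (x \<otimes> h) (y \<otimes> h) = d x y"
    and "\<forall>x\<in>carrier G. \<forall>y\<in>carrier G. d x y \<le> 1"
    and "Polish_space (Metric_space.mtopology (carrier G) d)"
    and "continuous_map (prod_topology (Metric_space.mtopology (carrier G) d)
                                      (Metric_space.mtopology (carrier G) d))
                        (Metric_space.mtopology (carrier G) d) (\<lambda>(x, y). x \<otimes> y)"
    and "continuous_map (Metric_space.mtopology (carrier G) d)
                        (Metric_space.mtopology (carrier G) d) (\<lambda>x. inv x)"
    and "subgroup G0 G"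
    and "countable G0"
    and "(Metric_space.mtopology (carrier G) d) closure_of G0 = carrier G"
    and "Polish_space TY"
    and "group_action G (topspace TY) a"
    and "continuous_map (prod_topology (Metric_space.mtopology (carrier G) d) TY) TY
                        (\<lambda>(g, y). a g y)"
  shows "\<exists>\<pi>. continuous_map TY (Xtop G d G0) \<pi>
           \<and> inj_on \<pi> (topspace TY)
           \<and> (\<forall>g\<in>carrier G. \<forall>y\<in>topspace TY. \<pi> (a g y) = actX G g (\<pi> y))
           \<and> (\<forall>U. openin TY U \<longrightarrow>
                 (\<exists>V. openin (Xtop G d G0) V \<and> U = {y \<in> topspace TY. \<pi> y \<in> V}))"
proof -
  obtain M \<rho> and cen :: "nat \<Rightarrow> 'y"
    where ms: "Metric_space M \<rho>" and TY: "TY = Metric_space.mtopology M \<rho>"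
    and cen: "\<And>i. M \<noteq> {} \<Longrightarrow> cen i \<in> M" "\<And>z e. z \<in> M \<Longrightarrow> 0 < e \<Longrightarrow> \<exists>i. \<rho> (cen i) z < e"
    by (rule Polish_space_dense_sequence[OF assms(11)]) blast
  interpret separable_metric_G_space G d M \<rho> a cen
    by (intro separable_metric_G_space.intro metric_G_space.intro right_invariant_metric_group.intro
        separable_metric_G_space_axioms.intro metric_G_space_axioms.intro
        right_invariant_metric_group_axioms.intro)
      (use assms(1-3,12,13) ms cen Metric_space.topspace_mtopology[OF ms] in \<open>auto simp: TY\<close>)
  have "G0 \<subseteq> carrier G" "\<one> \<in> G0"
    using subgroup.subset[OF assms(8)] subgroup.one_closed[OF assms(8)] .
  then show ?thesis
    unfolding TY by (rule equivariant_embedding)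
qed

end
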